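(* Let $L$ be a frame (a complete lattice in which $a\wedge\bigvee_i b_i=\bigvee_i(a\wedge b_i)$ for all $a$ and all families $(b_i)$), with least element $0$ and greatest element $1$, and let $\tau$ be a topology on the set $L$ all of whose open sets are upper-closed with respect to the order of $L$. Define $\Phi:\tau\to L$ by \[\Phi(U)=\bigvee\{\alpha\in L \mid \exists\beta\in U:\ \alpha\wedge\beta=0\}.\] Then $\Phi$ is a homomorphism of frames: $\Phi(L)=1$, $\Phi(U\cap V)=\Phi(U)\wedge\Phi(V)$ for all $U,V\in\tau$, and $\Phi\bigl(\bigcup_i U_i\bigr)=\bigvee_i\Phi(U_i)$ for every family $(U_i)$ in $\tau$.
   Context: $\tau$ is ordered by inclusion, so it is itself a frame with finite meets given by intersections and arbitrary joins given by unions. *)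

theory Defs
  imports "HOL-Analysis.Analysis"
begin

definition is_frame :: "('a::complete_lattice) itself \<Rightarrow> bool" where
  "is_frame _ \<longleftrightarrow> (\<forall>(a::'a) (B::'a set). inf a (Sup B) = Sup ((\<lambda>b. inf a b) ` B))"

definition Phi :: "('a::complete_lattice) set \<Rightarrow> 'a" where
  "Phi U = Sup {\<alpha>. \<exists>\<beta>\<in>U. inf \<alpha> \<beta> = bot}"

end

theory Submission
  imports Defs
begin

text \<open>Only the upper-closedness of the open sets matters: if \<open>\<alpha>\<close> is disjoint from
  \<open>u \<in> U\<close> and \<open>\<beta>\<close> from \<open>v \<in> V\<close>, then \<open>\<alpha> \<sqinter> \<beta>\<close> is disjoint from \<open>u \<squnion> v\<close>, which lies in
  \<open>U \<inter> V\<close>; distributivity then gives \<open>\<Phi> U \<sqinter> \<Phi> V \<le> \<Phi> (U \<inter> V)\<close>. Preservation of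
  unions and of the top element holds in every complete lattice.\<close>

lemma frame_inf_Sup:
  assumes "is_frame TYPE('a::complete_lattice)"
  shows "inf (a::'a) (Sup B) = (SUP b\<in>B. inf a b)"
  using assms unfolding is_frame_def by blast

lemma frame_inf_sup_distrib:
  assumes "is_frame TYPE('a::complete_lattice)"
  shows "inf (a::'a) (sup u v) = sup (inf a u) (inf a v)"
  using frame_inf_Sup[OF assms, of a "{u, v}"] by simp

lemma frame_inf_Sup_Sup:
  assumes "is_frame TYPE('a::complete_lattice)"
  shows "inf (Sup A) (Sup B :: 'a) = (SUP a\<in>A. SUP b\<in>B. inf a b)"
proof -
  have "inf (Sup A) (Sup B) = (SUP b\<in>B. inf b (Sup A))"
    by (simp add: frame_inf_Sup[OF assms] inf.commute)
  also have "\<dots> = (SUP b\<in>B. SUP a\<in>A. inf a b)"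
    by (simp add: frame_inf_Sup[OF assms] inf.commute)
  also have "\<dots> = (SUP a\<in>A. SUP b\<in>B. inf a b)"
    by (rule SUP_commute)
  finally show ?thesis .
qed

lemma Phi_UNIV: "Phi (UNIV :: 'a::complete_lattice set) = top"
proof -
  have "{\<alpha>::'a. \<exists>\<beta>\<in>UNIV. inf \<alpha> \<beta> = bot} = UNIV"
    by (auto intro: exI[of _ bot])
  then show ?thesis
    unfolding Phi_def by simp
qed

lemma Phi_mono: "X \<subseteq> Y \<Longrightarrow> Phi X \<le> Phi Y"
  unfolding Phi_def by (intro Sup_subset_mono) auto

lemma Phi_UNION: "Phi (\<Union>i\<in>I. U i) = (SUP i\<in>I. Phi (U i))"
proof -
  have "{\<alpha>. \<exists>\<beta>\<in>(\<Union>i\<in>I. U i). inf \<alpha> \<beta> = bot}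
      = (\<Union>i\<in>I. {\<alpha>. \<exists>\<beta>\<in>U i. inf \<alpha> \<beta> = bot})"
    by auto
  then show ?thesis
    unfolding Phi_def by (simp add: SUP_UNION[where f = "\<lambda>x. x", simplified])
qed

lemma inf_le_Phi_Int:
  fixes U V :: "'a::complete_lattice set"
  assumes frame: "is_frame TYPE('a)"
    and upper_U: "\<And>x y. x \<in> U \<Longrightarrow> x \<le> y \<Longrightarrow> y \<in> U"
    and upper_V: "\<And>x y. x \<in> V \<Longrightarrow> x \<le> y \<Longrightarrow> y \<in> V"
    and u: "u \<in> U" "inf a u = bot"
    and v: "v \<in> V" "inf b v = bot"
  shows "inf a b \<le> Phi (U \<inter> V)"
proof -
  have "sup u v \<in> U \<inter> V"
    using upper_U[OF u(1)] upper_V[OF v(1)] by simp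
  moreover have "inf (inf a b) (sup u v) = bot"
  proof -
    have "inf (inf a b) u = bot"
      using u(2) by (metis inf.commute inf.left_commute inf_bot_right)
    moreover have "inf (inf a b) v = bot"
      using v(2) by (metis inf.assoc inf_bot_right)
    ultimately show ?thesis
      by (simp add: frame_inf_sup_distrib[OF frame])
  qed
  ultimately show ?thesis
    unfolding Phi_def by (intro Sup_upper) blast
qed

lemma Phi_Int:
  fixes U V :: "'a::complete_lattice set"
  assumes frame: "is_frame TYPE('a)"
    and upper_U: "\<And>x y. x \<in> U \<Longrightarrow> x \<le> y \<Longrightarrow> y \<in> U"
    and upper_V: "\<And>x y. x \<in> V \<Longrightarrow> x \<le> y \<Longrightarrow> y \<in> V"
  shows "Phi (U \<inter> V) = inf (Phi U) (Phi V)"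
proof (rule antisym)
  show "Phi (U \<inter> V) \<le> inf (Phi U) (Phi V)"
    by (simp add: Phi_mono)
  have "inf (Phi U) (Phi V)
      = (SUP a\<in>{\<alpha>. \<exists>u\<in>U. inf \<alpha> u = bot}. SUP b\<in>{\<alpha>. \<exists>v\<in>V. inf \<alpha> v = bot}. inf a b)"
    unfolding Phi_def by (rule frame_inf_Sup_Sup[OF frame])
  also have "\<dots> \<le> Phi (U \<inter> V)"
    using inf_le_Phi_Int[OF frame upper_U upper_V] by (auto intro!: SUP_least)
  finally show "inf (Phi U) (Phi V) \<le> Phi (U \<inter> V)" .
qed

theorem mainTheorem3:
  fixes T :: "('a::complete_lattice) topology"
  assumes frame: "is_frame TYPE('a)"
    and top: "topspace T = UNIV"
    and upper: "\<And>U x y. openin T U \<Longrightarrow> x \<in> U \<Longrightarrow> x \<le> y \<Longrightarrow> y \<in> U"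
  shows "Phi (UNIV :: 'a set) = top
    \<and> (\<forall>U V. openin T U \<and> openin T V \<longrightarrow> Phi (U \<inter> V) = inf (Phi U) (Phi V))
    \<and> (\<forall>(I :: 'i set) (U :: 'i \<Rightarrow> 'a set). (\<forall>i\<in>I. openin T (U i))
           \<longrightarrow> Phi (\<Union>i\<in>I. U i) = (SUP i\<in>I. Phi (U i)))"
  by (simp add: Phi_UNIV Phi_Int[OF frame upper upper] Phi_UNION)

end
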